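(* Under the hypotheses of Theorem 1 (namely: $p$ positive, continuous, even on $(-1,1)$ with no nontrivial solution of $u''+pu=0$ having more than one zero in $(-1,1)$; $F$ the solution of $\mathcal{S}F=2p$ with $F(0)=0,F'(0)=1,F''(0)=0$; $\varphi:(-1,1)\to\mathbb{R}^n$ of class $C^3$ with $\varphi'\neq0$, $\varphi(0)=0$, $|\varphi'(0)|=1$, $\langle\varphi'(0),\varphi''(0)\rangle=0$, and $S_1\varphi\le 2p$ on $(-1,1)$), one has for all $x\in(-1,1)$ $$\frac{|\varphi(x)|}{|\varphi'(x)|^{1/2}}\ \ge\ \frac{|F(x)|}{F'(x)^{1/2}}.$$
   Context: For a real function $g$ with $g'\neq0$, $\mathcal{S}g=(g''/g')'-\tfrac12(g''/g')^2$. For a $C^3$ curve $\varphi$ into $\mathbb{R}^n$ with $\varphi'\neq0$, the Ahlfors Schwarzian is $S_1\varphi=\frac{\langle\varphi',\varphi'''\rangle}{|\varphi'|^2}-3\frac{\langle\varphi',\varphi''\rangle^2}{|\varphi'|^4}+\frac32\frac{|\varphi''|^2}{|\varphi'|^2}$, with Euclidean inner product and norm. *)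

theory Defs
  imports "HOL-Analysis.Analysis"
begin

definition vd :: "(real \<Rightarrow> 'a::real_normed_vector) \<Rightarrow> real \<Rightarrow> 'a" where
  "vd f = (\<lambda>t. vector_derivative f (at t))"

definition C3_on :: "real set \<Rightarrow> (real \<Rightarrow> 'a::real_normed_vector) \<Rightarrow> bool" where
  "C3_on S f \<longleftrightarrow> (\<exists>f1 f2 f3.
      (\<forall>x\<in>S. (f has_vector_derivative f1 x) (at x)) \<and>
      (\<forall>x\<in>S. (f1 has_vector_derivative f2 x) (at x)) \<and>
      (\<forall>x\<in>S. (f2 has_vector_derivative f3 x) (at x)) \<and>
      continuous_on S f3)"

definition schwarzian :: "(real \<Rightarrow> real) \<Rightarrow> real \<Rightarrow> real" where
  "schwarzian g x =
     deriv (\<lambda>t. deriv (deriv g) t / deriv g t) x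
     - (1/2) * (deriv (deriv g) x / deriv g x)^2"

definition ahlfors_S1 :: "(real \<Rightarrow> 'a::real_inner) \<Rightarrow> real \<Rightarrow> real" where
  "ahlfors_S1 \<phi> x =
     (let a = vd \<phi> x; b = vd (vd \<phi>) x; c = vd (vd (vd \<phi>)) x in
       inner a c / (norm a)^2 - 3 * (inner a b)^2 / (norm a)^4
       + (3/2) * (norm b)^2 / (norm a)^2)"

definition disconjugate_on :: "real set \<Rightarrow> (real \<Rightarrow> real) \<Rightarrow> bool" where
  "disconjugate_on S p \<longleftrightarrow> (\<forall>u u'.
      ((\<forall>x\<in>S. (u has_real_derivative u' x) (at x)) \<and>
       (\<forall>x\<in>S. (u' has_real_derivative (- p x * u x)) (at x)) \<and>
       (\<exists>x\<in>S. u x \<noteq> 0))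
      \<longrightarrow> \<not> (\<exists>a\<in>S. \<exists>b\<in>S. a \<noteq> b \<and> u a = 0 \<and> u b = 0))"

end

theory Submission
  imports Defs
begin

text \<open>
  Put U = F / sqrt F'.  The classical identity relating the Schwarzian to second order
  equations says that S F = 2p is equivalent to U'' + p U = 0; moreover U(0) = 0 and U'(0) = 1.
  For the curve, put w = |phi| / |phi'|^(1/2).  A direct computation gives
  w'' + (S_1 phi / 2) w = D / (4 |phi|^3 |phi'|^(9/2)), where D is |phi'|^2 times a squared norm
  of a vector built from the components of phi and phi'' orthogonal to phi'; hence w'' + p w >= 0
  wherever phi does not vanish, since S_1 phi <= 2p.  Sturm comparison of the supersolution w with
  the solution U, started at 0 where the Wronskian vanishes and w/U tends to 1, shows U <= w on
  (0,1) up to the first zero of phi, and a continuity argument shows that phi has no zero there.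
  Disconjugacy gives U > 0 on (0,1) and U < 0 on (-1,0); the left half follows from the right half
  by the reflection t |-> -t.
\<close>

section \<open>Calculus along curves\<close>

lemma has_real_derivative_inner:
  fixes f g :: "real \<Rightarrow> 'a::real_inner"
  assumes "(f has_vector_derivative f') (at t)" "(g has_vector_derivative g') (at t)"
  shows "((\<lambda>s. inner (f s) (g s)) has_real_derivative (inner (f t) g' + inner f' (g t))) (at t)"
proof -
  have "((\<lambda>s. inner (f s) (g s)) has_derivative
          (\<lambda>h. inner (f t) (h *\<^sub>R g') + inner (h *\<^sub>R f') (g t))) (at t)"
    using assms unfolding has_vector_derivative_def by (intro derivative_intros) auto
  then show ?thesis unfolding has_field_derivative_def
    by (rule has_derivative_eq_rhs) (auto simp: fun_eq_iff algebra_simps)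
qed

lemma has_real_derivative_norm:
  fixes f :: "real \<Rightarrow> 'a::real_inner"
  assumes "(f has_vector_derivative f') (at t)" "f t \<noteq> 0"
  shows "((\<lambda>s. norm (f s)) has_real_derivative (inner (f t) f' / norm (f t))) (at t)"
proof -
  have sq: "((\<lambda>s. inner (f s) (f s)) has_real_derivative (2 * inner (f t) f')) (at t)"
    using has_real_derivative_inner[OF assms(1) assms(1)] by (simp add: inner_commute)
  have "((\<lambda>s. sqrt (inner (f s) (f s))) has_real_derivative
          inverse (sqrt (inner (f t) (f t))) / 2 * (2 * inner (f t) f')) (at t)"
    using assms(2) by (intro DERIV_chain2[OF DERIV_real_sqrt sq]) simp
  then show ?thesis by (simp add: norm_eq_sqrt_inner[symmetric] field_simps)
qed

lemma sqrt_norm_has_derivative: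
  fixes f :: "real \<Rightarrow> 'a::real_inner"
  assumes "(f has_vector_derivative f') (at t)" "f t \<noteq> 0"
  shows "((\<lambda>s. sqrt (norm (f s))) has_real_derivative
            inner (f t) f' / (2 * sqrt (norm (f t)) ^ 3)) (at t)"
proof -
  define q where "q = sqrt (norm (f t))"
  have q: "q > 0" "norm (f t) = q\<^sup>2" using assms(2) by (simp_all add: q_def)
  show ?thesis
    by (rule DERIV_cong[OF DERIV_chain2[OF DERIV_real_sqrt has_real_derivative_norm[OF assms]]])
      (use q assms(2) in \<open>simp_all add: q_def[symmetric] field_simps eval_nat_numeral\<close>)
qed

lemma has_vector_derivative_reflect:
  fixes f :: "real \<Rightarrow> 'a::real_normed_vector"
  assumes "(f has_vector_derivative f') (at (- t))"
  shows "((\<lambda>s. f (- s)) has_vector_derivative - f') (at t)"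
proof -
  have "((\<lambda>s. - s) has_vector_derivative (- 1 :: real)) (at t)"
    by (rule has_vector_derivative_minus[OF has_vector_derivative_id])
  from vector_diff_chain_at[OF this, of f f'] assms show ?thesis by (simp add: o_def)
qed

lemma has_real_derivative_reflect:
  fixes f :: "real \<Rightarrow> real"
  assumes "(f has_real_derivative f') (at (- t))"
  shows "((\<lambda>s. f (- s)) has_real_derivative - f') (at t)"
  using has_vector_derivative_reflect[of f f' t] assms
  by (simp add: has_real_derivative_iff_has_vector_derivative)

lemma vd_iterates:
  fixes \<phi> \<phi>' \<phi>'' \<phi>''' :: "real \<Rightarrow> 'a::real_normed_vector"
  assumes S: "open S" and d1: "\<And>t. t \<in> S \<Longrightarrow> (\<phi> has_vector_derivative \<phi>' t) (at t)"
    and d2: "\<And>t. t \<in> S \<Longrightarrow> (\<phi>' has_vector_derivative \<phi>'' t) (at t)"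
    and d3: "\<And>t. t \<in> S \<Longrightarrow> (\<phi>'' has_vector_derivative \<phi>''' t) (at t)" and t: "t \<in> S"
  shows "vd \<phi> t = \<phi>' t" and "vd (vd \<phi>) t = \<phi>'' t" and "vd (vd (vd \<phi>)) t = \<phi>''' t"
proof -
  have v1: "vd \<phi> s = \<phi>' s" if "s \<in> S" for s
    unfolding vd_def using vector_derivative_at[OF d1[OF that]] .
  have v2: "vd (vd \<phi>) s = \<phi>'' s" if "s \<in> S" for s
  proof -
    have "(vd \<phi> has_vector_derivative \<phi>'' s) (at s)"
      by (rule has_vector_derivative_transform_within_open[OF d2[OF that] S that]) (simp add: v1)
    then show ?thesis unfolding vd_def[of "vd \<phi>"] by (rule vector_derivative_at)
  qed
  have "(vd (vd \<phi>) has_vector_derivative \<phi>''' t) (at t)"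
    by (rule has_vector_derivative_transform_within_open[OF d3[OF t] S t]) (simp add: v2)
  then show "vd (vd (vd \<phi>)) t = \<phi>''' t" unfolding vd_def[of "vd (vd \<phi>)"] by (rule vector_derivative_at)
  show "vd \<phi> t = \<phi>' t" "vd (vd \<phi>) t = \<phi>'' t" using v1 v2 t by auto
qed

lemma deriv_iterates:
  fixes F F' F'' :: "real \<Rightarrow> real"
  assumes S: "open S" and e1: "\<And>t. t \<in> S \<Longrightarrow> (F has_real_derivative F' t) (at t)"
    and e2: "\<And>t. t \<in> S \<Longrightarrow> (F' has_real_derivative F'' t) (at t)" and t: "t \<in> S"
  shows "deriv F t = F' t" and "deriv (deriv F) t = F'' t"
proof -
  have D1: "deriv F s = F' s" if "s \<in> S" for s using DERIV_imp_deriv[OF e1[OF that]] .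
  then show "deriv F t = F' t" using t .
  have "(deriv F has_real_derivative F'' t) (at t)"
    by (rule has_field_derivative_transform_within_open[OF e2[OF t] S t]) (simp add: D1)
  then show "deriv (deriv F) t = F'' t" by (rule DERIV_imp_deriv)
qed

section \<open>The curve side: the function |phi| / |phi'|^(1/2)\<close>

definition schwarz_form :: "'a::real_inner \<Rightarrow> 'a \<Rightarrow> 'a \<Rightarrow> real" where
  "schwarz_form a b c =
     inner a c / (norm a)^2 - 3 * (inner a b)^2 / (norm a)^4 + 3/2 * (norm b)^2 / (norm a)^2"

lemma ahlfors_S1_eq_schwarz_form:
  fixes \<phi> \<phi>' \<phi>'' \<phi>''' :: "real \<Rightarrow> 'a::real_inner"
  assumes "open S" "\<And>t. t \<in> S \<Longrightarrow> (\<phi> has_vector_derivative \<phi>' t) (at t)"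
    "\<And>t. t \<in> S \<Longrightarrow> (\<phi>' has_vector_derivative \<phi>'' t) (at t)"
    "\<And>t. t \<in> S \<Longrightarrow> (\<phi>'' has_vector_derivative \<phi>''' t) (at t)" "t \<in> S"
  shows "ahlfors_S1 \<phi> t = schwarz_form (\<phi>' t) (\<phi>'' t) (\<phi>''' t)"
  using vd_iterates[OF assms] by (simp add: ahlfors_S1_def schwarz_form_def Let_def)

definition speed_ratio :: "(real \<Rightarrow> 'a::real_inner) \<Rightarrow> (real \<Rightarrow> 'a) \<Rightarrow> real \<Rightarrow> real" where
  "speed_ratio \<phi> \<phi>' t = norm (\<phi> t) / sqrt (norm (\<phi>' t))"

definition speed_ratio_deriv ::
    "(real \<Rightarrow> 'a::real_inner) \<Rightarrow> (real \<Rightarrow> 'a) \<Rightarrow> (real \<Rightarrow> 'a) \<Rightarrow> real \<Rightarrow> real" where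
  "speed_ratio_deriv \<phi> \<phi>' \<phi>'' t =
     inner (\<phi> t) (\<phi>' t) / (norm (\<phi> t) * sqrt (norm (\<phi>' t)))
     - norm (\<phi> t) * inner (\<phi>' t) (\<phi>'' t) / (2 * sqrt (norm (\<phi>' t)) ^ 5)"

text \<open>
  The numerator of w'' + (S_1 phi / 2) w, for P = phi, a = phi', b = phi'' at a point.
  It equals |a|^2 |v|^2 with v = |P|^2 b_perp + 2 |a|^2 P_perp, where _perp denotes the component
  orthogonal to a; in particular it is nonnegative.
\<close>

definition orth_defect :: "'a::real_inner \<Rightarrow> 'a \<Rightarrow> 'a \<Rightarrow> real" where
  "orth_defect P a b =
     (let A = inner a a; \<rho> = inner P P in
       4*\<rho>*A^3 + 4*\<rho>*A^2*inner P b - 4*A^2*(inner P a)^2 - 4*\<rho>*inner P a*inner a b*A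
       - \<rho>^2*(inner a b)^2 + \<rho>^2*inner b b*A)"

lemma orth_defect_nonneg:
  fixes P a b :: "'a::real_inner"
  assumes "a \<noteq> 0"
  shows "0 \<le> orth_defect P a b"
proof -
  define A where "A = inner a a"
  define \<rho> where "\<rho> = inner P P"
  have A: "A > 0" using assms by (simp add: A_def)
  define v where "v = \<rho> *\<^sub>R (b - (inner a b / A) *\<^sub>R a) + (2*A) *\<^sub>R (P - (inner P a / A) *\<^sub>R a)"
  have "orth_defect P a b = A * inner v v"
    using A unfolding v_def orth_defect_def Let_def
    by (simp add: inner_add_left inner_add_right inner_diff_left inner_diff_right inner_commute
        field_simps power2_eq_square power3_eq_cube flip: A_def \<rho>_def)
  then show ?thesis using A by simp
qed

lemma speed_ratio_has_derivative:
  fixes \<phi> \<phi>' \<phi>'' :: "real \<Rightarrow> 'a::real_inner"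
  assumes d1: "(\<phi> has_vector_derivative \<phi>' t) (at t)" and d2: "(\<phi>' has_vector_derivative \<phi>'' t) (at t)"
    and nz: "\<phi> t \<noteq> 0" "\<phi>' t \<noteq> 0"
  shows "(speed_ratio \<phi> \<phi>' has_real_derivative speed_ratio_deriv \<phi> \<phi>' \<phi>'' t) (at t)"
proof -
  define q where "q = sqrt (norm (\<phi>' t))"
  have q: "q > 0" using nz by (simp add: q_def)
  note chain = DERIV_divide[OF has_real_derivative_norm[OF d1 nz(1)] sqrt_norm_has_derivative[OF d2 nz(2)]]
  show ?thesis unfolding speed_ratio_def[abs_def]
    by (rule DERIV_cong[OF chain])
      (use q nz in \<open>simp_all add: speed_ratio_deriv_def q_def[symmetric] field_simps eval_nat_numeral\<close>)
qed

text \<open>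
  The algebraic core of the second derivative of w: n = |phi|, q = |phi'|^(1/2), and pa, ab, pb,
  bb, ac stand for the inner products of phi, phi', phi'', phi''' indicated by their letters.
  The left side is the quotient-rule derivative of speed_ratio_deriv.
\<close>

lemma speed_ratio_second_derivative_identity:
  fixes n q pa ab pb bb ac :: real
  assumes "n > 0" "q > 0"
  shows "((q^4 + pb) * (n*q) - pa * (pa/n * q + n * (ab / (2*q^3)))) / (n*q)^2
         - ((pa/n * ab + n * (bb + ac)) * (2*q^5) - n * ab * (10 * q^4 * (ab / (2*q^3)))) / (2*q^5)^2
       = (4*n^2*q^12 + 4*n^2*q^8*pb - 4*q^8*pa^2 - 4*n^2*pa*ab*q^4 - n^4*ab^2 + n^4*bb*q^4)
           / (4*n^3*q^9)
         - (ac/q^4 - 3*ab^2/q^8 + 3/2*bb/q^4) / 2 * (n/q)"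
  using assms by (simp add: field_simps) algebra

lemma speed_ratio_second_derivative:
  fixes \<phi> \<phi>' \<phi>'' :: "real \<Rightarrow> 'a::real_inner" and c :: 'a
  assumes d1: "(\<phi> has_vector_derivative \<phi>' t) (at t)" and d2: "(\<phi>' has_vector_derivative \<phi>'' t) (at t)"
    and d3: "(\<phi>'' has_vector_derivative c) (at t)" and nz: "\<phi> t \<noteq> 0" "\<phi>' t \<noteq> 0"
  shows "(speed_ratio_deriv \<phi> \<phi>' \<phi>'' has_real_derivative
            orth_defect (\<phi> t) (\<phi>' t) (\<phi>'' t) / (4 * norm (\<phi> t) ^ 3 * sqrt (norm (\<phi>' t)) ^ 9)
            - schwarz_form (\<phi>' t) (\<phi>'' t) c / 2 * speed_ratio \<phi> \<phi>' t) (at t)"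
proof -
  define q where "q = sqrt (norm (\<phi>' t))"
  define n where "n = norm (\<phi> t)"
  have q: "q > 0" "norm (\<phi>' t) = q\<^sup>2" using nz by (simp_all add: q_def)
  then have q4: "inner (\<phi>' t) (\<phi>' t) = q ^ 4" "norm (\<phi>' t) ^ 2 = q ^ 4" "norm (\<phi>' t) ^ 4 = q ^ 8"
    by (simp_all flip: power2_norm_eq_inner power_mult)
  have n: "n > 0" "inner (\<phi> t) (\<phi> t) = n\<^sup>2" using nz by (simp_all add: n_def power2_norm_eq_inner)
  have acc: "norm (\<phi>'' t) ^ 2 = inner (\<phi>'' t) (\<phi>'' t)" by (simp add: power2_norm_eq_inner)
  note dn = has_real_derivative_norm[OF d1 nz(1)]
  note dq = sqrt_norm_has_derivative[OF d2 nz(2)]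
  note dpa = has_real_derivative_inner[OF d1 d2]
  note dab = has_real_derivative_inner[OF d2 d3]
  have nq: "norm (\<phi> t) * sqrt (norm (\<phi>' t)) \<noteq> 0" "2 * sqrt (norm (\<phi>' t)) ^ 5 \<noteq> 0" using nz by auto
  note chain = DERIV_diff[OF DERIV_divide[OF dpa DERIV_mult[OF dn dq] nq(1)]
                   DERIV_divide[OF DERIV_mult[OF dn dab] DERIV_cmult[OF DERIV_power[OF dq]] nq(2)]]
  show ?thesis unfolding speed_ratio_deriv_def[abs_def]
    apply (rule DERIV_cong[OF chain])
    using speed_ratio_second_derivative_identity[OF n(1) q(1), where pa = "inner (\<phi> t) (\<phi>' t)"
        and ab = "inner (\<phi>' t) (\<phi>'' t)" and pb = "inner (\<phi> t) (\<phi>'' t)" and bb = "inner (\<phi>'' t) (\<phi>'' t)"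
        and ac = "inner (\<phi>' t) c"]
    apply (simp add: acc q4 n(2) orth_defect_def schwarz_form_def speed_ratio_def Let_def
        q_def[symmetric] n_def[symmetric] inner_commute)
    apply (simp add: power2_eq_square ac_simps)
    done
qed

lemma speed_ratio_supersolution:
  fixes \<phi> \<phi>' \<phi>'' :: "real \<Rightarrow> 'a::real_inner" and c :: 'a
  assumes d1: "(\<phi> has_vector_derivative \<phi>' t) (at t)" and d2: "(\<phi>' has_vector_derivative \<phi>'' t) (at t)"
    and d3: "(\<phi>'' has_vector_derivative c) (at t)" and nz: "\<phi> t \<noteq> 0" "\<phi>' t \<noteq> 0"
    and S: "schwarz_form (\<phi>' t) (\<phi>'' t) c \<le> 2 * p"
  shows "\<exists>D. (speed_ratio_deriv \<phi> \<phi>' \<phi>'' has_real_derivative D) (at t) \<and> 0 \<le> D + p * speed_ratio \<phi> \<phi>' t"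
proof -
  define E where "E = orth_defect (\<phi> t) (\<phi>' t) (\<phi>'' t) / (4 * norm (\<phi> t) ^ 3 * sqrt (norm (\<phi>' t)) ^ 9)"
  have "0 \<le> E" using orth_defect_nonneg[OF nz(2)] by (simp add: E_def)
  moreover have "0 \<le> (p - schwarz_form (\<phi>' t) (\<phi>'' t) c / 2) * speed_ratio \<phi> \<phi>' t"
    using S by (simp add: speed_ratio_def)
  ultimately have "0 \<le> (E - schwarz_form (\<phi>' t) (\<phi>'' t) c / 2 * speed_ratio \<phi> \<phi>' t) + p * speed_ratio \<phi> \<phi>' t"
    by (simp add: algebra_simps)
  then show ?thesis
    using speed_ratio_second_derivative[OF d1 d2 d3 nz] unfolding E_def by blast
qed

section \<open>The function side: F / sqrt F' solves u'' + p u = 0\<close>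

lemma schwarzian_from_derivatives:
  fixes F F' F'' :: "real \<Rightarrow> real" and c :: real
  assumes S: "open S" and e1: "\<And>t. t \<in> S \<Longrightarrow> (F has_real_derivative F' t) (at t)"
    and e2: "\<And>t. t \<in> S \<Longrightarrow> (F' has_real_derivative F'' t) (at t)"
    and e3: "(F'' has_real_derivative c) (at t)" and t: "t \<in> S" and nz: "F' t \<noteq> 0"
  shows "schwarzian F t = c / F' t - 3/2 * (F'' t / F' t)^2"
proof -
  have "((\<lambda>s. F'' s / F' s) has_real_derivative (c * F' t - F'' t * F'' t) / (F' t * F' t)) (at t)"
    by (rule DERIV_divide[OF e3 e2[OF t] nz])
  then have "((\<lambda>s. deriv (deriv F) s / deriv F s) has_real_derivative
               (c * F' t - F'' t * F'' t) / (F' t * F' t)) (at t)"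
    by (rule has_field_derivative_transform_within_open[OF _ S t]) (simp add: deriv_iterates[OF S e1 e2])
  then show ?thesis
    using nz unfolding schwarzian_def
    by (simp add: DERIV_imp_deriv deriv_iterates[OF S e1 e2 t] field_simps power2_eq_square)
qed

text \<open>
  Pointwise form of the classical fact: if F''' = 2p F' + (3/2) F''^2 / F' (that is, S F = 2p),
  then U = F / sqrt F' has derivative U' = sqrt F' - F F'' / (2 F' sqrt F') and U'' = -p U.
\<close>

lemma sqrt_normalization_derivatives:
  fixes F F' F'' :: "real \<Rightarrow> real" and c :: real
  assumes e1: "(F has_real_derivative F' t) (at t)" and e2: "(F' has_real_derivative F'' t) (at t)"
    and e3: "(F'' has_real_derivative c) (at t)" and pos: "F' t > 0"
    and schw: "c = 2 * p * F' t + 3/2 * (F'' t)^2 / F' t"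
  shows "((\<lambda>s. F s / sqrt (F' s)) has_real_derivative
            sqrt (F' t) - F t * F'' t / (2 * F' t * sqrt (F' t))) (at t)"
    and "((\<lambda>s. sqrt (F' s) - F s * F'' s / (2 * F' s * sqrt (F' s))) has_real_derivative
            - p * (F t / sqrt (F' t))) (at t)"
proof -
  obtain r where r: "r > 0" "sqrt (F' t) = r" "F' t = r\<^sup>2"
    using pos by (intro that[of "sqrt (F' t)"]) auto
  have dsq: "((\<lambda>s. sqrt (F' s)) has_real_derivative F'' t / (2 * sqrt (F' t))) (at t)"
    using DERIV_chain2[OF DERIV_real_sqrt[OF pos] e2] by (simp add: field_simps)
  have nz: "sqrt (F' t) \<noteq> 0" "2 * F' t * sqrt (F' t) \<noteq> 0" using r by simp_all
  show "((\<lambda>s. F s / sqrt (F' s)) has_real_derivative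
            sqrt (F' t) - F t * F'' t / (2 * F' t * sqrt (F' t))) (at t)"
    apply (rule DERIV_cong[OF DERIV_divide[OF e1 dsq nz(1)]])
    unfolding r(2) unfolding r(3) using r(1) by (simp add: field_simps power2_eq_square)
  note chain = DERIV_diff[OF dsq DERIV_divide[OF DERIV_mult[OF e1 e3]
             DERIV_mult[OF DERIV_cmult[OF e2] dsq] nz(2)]]
  show "((\<lambda>s. sqrt (F' s) - F s * F'' s / (2 * F' s * sqrt (F' s))) has_real_derivative
            - p * (F t / sqrt (F' t))) (at t)"
    apply (rule DERIV_cong[OF chain])
    unfolding schw r(2) unfolding r(3) using r(1) apply (simp add: field_simps)
    by algebra
qed

lemma connected_nonvanishing_pos:
  fixes f :: "real \<Rightarrow> real"
  assumes "connected S" "continuous_on S f" "\<forall>x\<in>S. f x \<noteq> 0" "a \<in> S" "f a > 0" "x \<in> S"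
  shows "f x > 0"
proof (rule ccontr)
  assume "\<not> f x > 0"
  then have "f x \<le> 0" by simp
  moreover have "connected (f ` S)" using assms(1,2) by (rule connected_continuous_image[rotated])
  ultimately have "0 \<in> f ` S"
    using assms(4-6) unfolding connected_iff_interval by (metis imageI less_imp_le)
  then show False using assms(3) by auto
qed

definition sqrt_normalized :: "(real \<Rightarrow> real) \<Rightarrow> real \<Rightarrow> real" where
  "sqrt_normalized F t = F t / sqrt (deriv F t)"

definition sqrt_normalized_deriv :: "(real \<Rightarrow> real) \<Rightarrow> real \<Rightarrow> real" where
  "sqrt_normalized_deriv F t =
     sqrt (deriv F t) - F t * deriv (deriv F) t / (2 * deriv F t * sqrt (deriv F t))"

lemma schwarzian_normal_solution:
  fixes F p :: "real \<Rightarrow> real"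
  assumes S: "open S" "is_interval S" and F3: "C3_on S F" and nz: "\<forall>x\<in>S. deriv F x \<noteq> 0"
    and a: "a \<in> S" "deriv F a > 0" and schw: "\<forall>x\<in>S. schwarzian F x = 2 * p x" and x: "x \<in> S"
  shows "deriv F x > 0"
    and "(sqrt_normalized F has_real_derivative sqrt_normalized_deriv F x) (at x)"
    and "(sqrt_normalized_deriv F has_real_derivative - p x * sqrt_normalized F x) (at x)"
proof -
  obtain F' F'' F''' where
    e1: "\<And>t. t \<in> S \<Longrightarrow> (F has_real_derivative F' t) (at t)" and
    e2: "\<And>t. t \<in> S \<Longrightarrow> (F' has_real_derivative F'' t) (at t)" and
    e3: "\<And>t. t \<in> S \<Longrightarrow> (F'' has_real_derivative F''' t) (at t)"
    using F3 unfolding C3_on_def has_real_derivative_iff_has_vector_derivative by blast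
  have D: "deriv F t = F' t" "deriv (deriv F) t = F'' t" if "t \<in> S" for t
    using deriv_iterates[OF S(1) e1 e2 that] by auto
  have pos: "F' t > 0" if "t \<in> S" for t
  proof (rule connected_nonvanishing_pos[OF _ _ _ a(1) _ that])
    show "connected S" using S(2) by (simp add: is_interval_connected)
    show "continuous_on S F'" using e2 by (intro continuous_at_imp_continuous_on) (auto intro: DERIV_isCont)
  qed (use nz a D in auto)
  have rel: "F''' t = 2 * p t * F' t + 3/2 * (F'' t)^2 / F' t" if "t \<in> S" for t
    using schwarzian_from_derivatives[OF S(1) e1 e2 e3[OF that] that] schw that pos[OF that]
    by (simp add: field_simps power2_eq_square)
  note sol = sqrt_normalization_derivatives[OF e1[OF x] e2[OF x] e3[OF x] pos[OF x] rel[OF x]]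
  show "deriv F x > 0" using pos[OF x] D(1)[OF x] by simp
  show "(sqrt_normalized F has_real_derivative sqrt_normalized_deriv F x) (at x)"
    unfolding sqrt_normalized_def[abs_def] sqrt_normalized_deriv_def D[OF x]
    by (rule has_field_derivative_transform_within_open[OF sol(1) S(1) x]) (auto simp: D)
  show "(sqrt_normalized_deriv F has_real_derivative - p x * sqrt_normalized F x) (at x)"
    unfolding sqrt_normalized_def sqrt_normalized_deriv_def[abs_def] D[OF x]
    by (rule has_field_derivative_transform_within_open[OF sol(2) S(1) x]) (auto simp: D)
qed

text \<open>By disconjugacy, the solution with U(0) = 0, U'(0) = 1 has no other zero, hence has the sign of t.\<close>

lemma disconjugate_solution_sign:
  fixes U U' p :: "real \<Rightarrow> real"
  assumes S: "open S" "is_interval S" "0 \<in> S" and disc: "disconjugate_on S p"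
    and dU: "\<And>t. t \<in> S \<Longrightarrow> (U has_real_derivative U' t) (at t)"
    and dU': "\<And>t. t \<in> S \<Longrightarrow> (U' has_real_derivative - p t * U t) (at t)"
    and init: "U 0 = 0" "U' 0 = 1"
  shows "\<forall>t\<in>S. 0 < t \<longrightarrow> U t > 0" and "\<forall>t\<in>S. t < 0 \<longrightarrow> U t < 0"
proof -
  obtain e where e: "e > 0" "ball 0 e \<subseteq> S" using S(1,3) open_contains_ball by blast
  obtain d where d: "d > 0" "\<And>h. 0 < h \<Longrightarrow> h < d \<Longrightarrow> U h > 0"
    using DERIV_pos_inc_right[OF dU[OF S(3)]] init by auto
  obtain d' where d': "d' > 0" "\<And>h. 0 < h \<Longrightarrow> h < d' \<Longrightarrow> U (- h) < 0"
    using DERIV_pos_inc_left[OF dU[OF S(3)]] init by auto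
  define h where "h = min (min d d') e / 2"
  have h: "0 < h" "h < d" "h < d'" "h \<in> S" "- h \<in> S"
    using d(1) d'(1) e by (auto simp: h_def dist_norm intro!: subsetD[OF e(2)])
  have Uh: "U h > 0" "U (- h) < 0" using d(2) d'(2) h by auto
  have "(\<forall>x\<in>S. (U has_real_derivative U' x) (at x)) \<and>
        (\<forall>x\<in>S. (U' has_real_derivative - p x * U x) (at x)) \<and> (\<exists>x\<in>S. U x \<noteq> 0)"
    using dU dU' Uh(1) h(4) by (auto intro!: bexI[of _ h])
  then have "\<not> (\<exists>a\<in>S. \<exists>b\<in>S. a \<noteq> b \<and> U a = 0 \<and> U b = 0)"
    using disc unfolding disconjugate_on_def by blast
  then have nz: "U t \<noteq> 0" if "t \<in> S" "t \<noteq> 0" for t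
    using that S(3) init(1) by blast
  have cU: "continuous_on S U"
    using dU by (intro continuous_at_imp_continuous_on) (auto intro: DERIV_isCont)
  have conn: "connected (S \<inter> {0<..})" "connected (S \<inter> {..<0})"
    using S(2) by (auto simp: is_interval_connected_1[symmetric] intro!: is_interval_Int)
  show "\<forall>t\<in>S. 0 < t \<longrightarrow> U t > 0"
    using connected_nonvanishing_pos[OF conn(1) continuous_on_subset[OF cU], of h] nz h Uh by auto
  show "\<forall>t\<in>S. t < 0 \<longrightarrow> U t < 0"
    using connected_nonvanishing_pos[OF conn(2), of "\<lambda>t. - U t" "- h"]
      continuous_on_minus[OF continuous_on_subset[OF cU]] nz h Uh by auto
qed

section \<open>Sturm comparison from the origin\<close>

text \<open>
  A supersolution w of u'' + p u = 0 whose Wronskian with the positive solution U vanishes at 0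
  and with w/U tending to 1 at 0 stays above U: the Wronskian is nondecreasing, hence
  nonnegative, hence w/U is nondecreasing.
\<close>

lemma sturm_comparison:
  fixes w w' U U' p :: "real \<Rightarrow> real"
  assumes dw: "\<And>t. 0 < t \<Longrightarrow> t < y \<Longrightarrow> (w has_real_derivative w' t) (at t)"
    and super: "\<And>t. 0 < t \<Longrightarrow> t < y \<Longrightarrow> \<exists>D. (w' has_real_derivative D) (at t) \<and> 0 \<le> D + p t * w t"
    and dU: "\<And>t. 0 < t \<Longrightarrow> t < y \<Longrightarrow> (U has_real_derivative U' t) (at t)"
    and dU': "\<And>t. 0 < t \<Longrightarrow> t < y \<Longrightarrow> (U' has_real_derivative - p t * U t) (at t)"
    and Upos: "\<And>t. 0 < t \<Longrightarrow> t < y \<Longrightarrow> U t > 0"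
    and wronskian_0: "((\<lambda>t. w' t * U t - w t * U' t) \<longlongrightarrow> 0) (at_right 0)"
    and ratio_0: "((\<lambda>t. w t / U t) \<longlongrightarrow> 1) (at_right 0)"
    and x: "0 < x" "x < y"
  shows "U x \<le> w x"
proof -
  define Q where "Q t = w' t * U t - w t * U' t" for t
  have dQ: "\<exists>D. (Q has_real_derivative D) (at t) \<and> 0 \<le> D" if t: "0 < t" "t < y" for t
  proof -
    obtain D where D: "(w' has_real_derivative D) (at t)" "0 \<le> D + p t * w t"
      using super[OF t] by blast
    have "(Q has_real_derivative U t * (D + p t * w t)) (at t)"
      unfolding Q_def[abs_def]
      by (rule DERIV_cong[OF DERIV_diff[OF DERIV_mult[OF D(1) dU[OF t]] DERIV_mult[OF dw[OF t] dU'[OF t]]]])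
        (simp add: algebra_simps)
    then show ?thesis using D(2) Upos[OF t] by auto
  qed
  have Q_nonneg: "0 \<le> Q t" if t: "0 < t" "t < y" for t
  proof (rule tendsto_upperbound[OF wronskian_0[folded Q_def] eventually_at_rightI[of 0 t]])
    fix s assume s: "s \<in> {0<..<t}"
    show "Q s \<le> Q t"
    proof (rule DERIV_nonneg_imp_nondecreasing[of s t Q])
      show "\<exists>D. (Q has_real_derivative D) (at r) \<and> 0 \<le> D" if "s \<le> r" "r \<le> t" for r
        using s t that by (intro dQ) auto
    qed (use s in auto)
  qed (use t in auto)
  have dR: "\<exists>D. ((\<lambda>t. w t / U t) has_real_derivative D) (at t) \<and> 0 \<le> D" if t: "0 < t" "t < y" for t
  proof -
    have "((\<lambda>t. w t / U t) has_real_derivative Q t / (U t * U t)) (at t)"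
      using DERIV_divide[OF dw[OF t] dU[OF t]] Upos[OF t] by (simp add: Q_def)
    then show ?thesis using Q_nonneg[OF t] by auto
  qed
  have "1 \<le> w x / U x"
  proof (rule tendsto_upperbound[OF ratio_0 eventually_at_rightI[of 0 x]])
    fix s assume s: "s \<in> {0<..<x}"
    show "w s / U s \<le> w x / U x"
    proof (rule DERIV_nonneg_imp_nondecreasing[of s x])
      show "\<exists>D. ((\<lambda>t. w t / U t) has_real_derivative D) (at r) \<and> 0 \<le> D" if "s \<le> r" "r \<le> x" for r
        using s x that by (intro dR) auto
    qed (use s in auto)
  qed (use x in auto)
  then show ?thesis using Upos[OF x] by (simp add: field_simps)
qed

lemma first_zero:
  fixes w :: "real \<Rightarrow> real"
  assumes cw: "\<And>t. 0 < t \<Longrightarrow> t < b \<Longrightarrow> isCont w t"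
    and \<delta>: "\<delta> > 0" "\<And>t. 0 < t \<Longrightarrow> t < \<delta> \<Longrightarrow> w t \<noteq> 0"
    and t: "0 < t" "t < b" "w t = 0"
  obtains z where "0 < z" "z \<le> t" "w z = 0" "\<And>s. 0 < s \<Longrightarrow> s < z \<Longrightarrow> w s \<noteq> 0"
proof -
  define T where "T = {s \<in> {\<delta>/2..t}. w s = 0}"
  have "\<delta> \<le> t" using \<delta>(2)[OF t(1)] t(3) by force
  then have T: "t \<in> T" "bdd_below T"
    using \<delta>(1) t(3) by (auto simp: T_def intro!: bdd_belowI[of _ "\<delta>/2"])
  have "closed T" unfolding T_def
    using \<delta>(1) t by (intro continuous_closed_preimage_constant continuous_at_imp_continuous_on) (auto intro!: cw)
  define z where "z = Inf T"
  have "T \<noteq> {}" using T(1) by blast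
  then have "z \<in> T" unfolding z_def using T(2) \<open>closed T\<close> by (rule closed_contains_Inf)
  then have z: "0 < z" "z \<le> t" "w z = 0" using \<delta>(1) by (auto simp: T_def)
  have "w s \<noteq> 0" if "0 < s" "s < z" for s
  proof
    assume "w s = 0"
    then have "s < \<delta> \<or> s \<in> T" using that \<open>z \<in> T\<close> by (auto simp: T_def)
    then show False using \<delta>(2) that \<open>w s = 0\<close> cInf_lower[OF _ T(2), of s] by (auto simp: z_def)
  qed
  then show ?thesis using z that by blast
qed

text \<open>
  If the comparison U <= w holds on every initial interval on which w does not vanish, then w
  never vanishes on (0,b) (at a first zero z, continuity would give 0 < U z <= w z = 0), so the
  comparison holds on all of (0,b).
\<close>

lemma comparison_continuation:
  fixes w U :: "real \<Rightarrow> real"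
  assumes cw: "\<And>t. 0 < t \<Longrightarrow> t < b \<Longrightarrow> isCont w t" and cU: "\<And>t. 0 < t \<Longrightarrow> t < b \<Longrightarrow> isCont U t"
    and Upos: "\<And>t. 0 < t \<Longrightarrow> t < b \<Longrightarrow> U t > 0"
    and near_0: "\<exists>\<delta>>0. \<forall>t. 0 < t \<and> t < \<delta> \<longrightarrow> w t \<noteq> 0"
    and comp: "\<And>y x. y \<le> b \<Longrightarrow> (\<And>t. 0 < t \<Longrightarrow> t < y \<Longrightarrow> w t \<noteq> 0) \<Longrightarrow> 0 < x \<Longrightarrow> x < y \<Longrightarrow> U x \<le> w x"
    and x: "0 < x" "x < b"
  shows "U x \<le> w x"
proof -
  obtain \<delta> where \<delta>: "\<delta> > 0" "\<And>t. 0 < t \<Longrightarrow> t < \<delta> \<Longrightarrow> w t \<noteq> 0" using near_0 by blast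
  have nz: "w t \<noteq> 0" if t: "0 < t" "t < b" for t
  proof
    assume "w t = 0"
    then obtain z where z: "0 < z" "z \<le> t" "w z = 0" and before: "\<And>s. 0 < s \<Longrightarrow> s < z \<Longrightarrow> w s \<noteq> 0"
      using first_zero[OF cw \<delta> t] by blast
    have "z < b" using z t by simp
    have below: "U s \<le> w s" if "0 < s" "s < z" for s
      using comp[OF less_imp_le[OF \<open>z < b\<close>] before that] .
    have "U z \<le> w z"
    proof (rule tendsto_le[of "at_left z" w "w z" U "U z"])
      show "(w \<longlongrightarrow> w z) (at_left z)" "(U \<longlongrightarrow> U z) (at_left z)"
        using cw[OF z(1) \<open>z < b\<close>] cU[OF z(1) \<open>z < b\<close>] by (auto simp: isCont_def intro: tendsto_within_subset)
      show "\<forall>\<^sub>F s in at_left z. U s \<le> w s"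
        by (rule eventually_at_leftI[of 0]) (use below z(1) in auto)
    qed simp
    then show False using Upos[OF z(1) \<open>z < b\<close>] z(3) by simp
  qed
  show ?thesis by (rule comp[OF order_refl nz x])
qed

lemma norm_over_parameter_limit:
  fixes \<phi> :: "real \<Rightarrow> 'a::real_normed_vector"
  assumes "\<phi> 0 = 0" and "(\<phi> has_vector_derivative v) (at 0)"
  shows "((\<lambda>y. norm (\<phi> y) / y) \<longlongrightarrow> norm v) (at_right 0)"
proof -
  have "(\<phi> has_derivative (\<lambda>h. h *\<^sub>R v)) (at 0)"
    using assms(2) by (simp add: has_vector_derivative_def)
  then have "((\<lambda>y. ((\<phi> y - \<phi> 0) - (y - 0) *\<^sub>R v) /\<^sub>R norm (y - 0)) \<longlongrightarrow> 0) (at 0)"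
    by (simp only: has_derivative_at_within)
  then have "((\<lambda>y. ((\<phi> y - \<phi> 0) - (y - 0) *\<^sub>R v) /\<^sub>R norm (y - 0)) \<longlongrightarrow> 0) (at_right 0)"
    by (rule tendsto_within_subset) simp
  then have "((\<lambda>y. ((\<phi> y - \<phi> 0) - (y - 0) *\<^sub>R v) /\<^sub>R norm (y - 0) + v) \<longlongrightarrow> 0 + v) (at_right 0)"
    by (intro tendsto_add tendsto_const)
  moreover have "\<forall>\<^sub>F y in at_right 0. ((\<phi> y - \<phi> 0) - (y - 0) *\<^sub>R v) /\<^sub>R norm (y - 0) + v = (1/y) *\<^sub>R \<phi> y"
    by (rule eventually_at_rightI[of 0 1]) (auto simp: assms(1) scaleR_diff_right divide_inverse)
  ultimately have "((\<lambda>y. (1/y) *\<^sub>R \<phi> y) \<longlongrightarrow> v) (at_right 0)"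
    by (simp add: Lim_transform_eventually)
  then have "((\<lambda>y. norm ((1/y) *\<^sub>R \<phi> y)) \<longlongrightarrow> norm v) (at_right 0)"
    by (rule tendsto_norm)
  moreover have "\<forall>\<^sub>F y in at_right 0. norm ((1/y) *\<^sub>R \<phi> y) = norm (\<phi> y) / y"
    by (rule eventually_at_rightI[of 0 1]) auto
  ultimately show ?thesis by (rule Lim_transform_eventually)
qed

lemma speed_ratio_quotient_limit:
  fixes \<phi> \<phi>' :: "real \<Rightarrow> 'a::real_inner" and U :: "real \<Rightarrow> real"
  assumes d1: "(\<phi> has_vector_derivative \<phi>' 0) (at 0)" and init: "\<phi> 0 = 0" "norm (\<phi>' 0) = 1"
    and c1: "isCont \<phi>' 0" and dU: "(U has_real_derivative 1) (at 0)" and U0: "U 0 = 0"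
  shows "((\<lambda>t. speed_ratio \<phi> \<phi>' t / U t) \<longlongrightarrow> 1) (at_right 0)"
proof -
  have "((\<lambda>y. (U y - U 0) / (y - 0)) \<longlongrightarrow> 1) (at 0)"
    using dU unfolding has_field_derivative_iff by simp
  then have "((\<lambda>y. U y / y) \<longlongrightarrow> 1) (at_right 0)"
    using U0 by (simp add: Lim_at_imp_Lim_at_within)
  moreover have "((\<lambda>y. sqrt (norm (\<phi>' y))) \<longlongrightarrow> sqrt (norm (\<phi>' 0))) (at_right 0)"
    using c1 by (intro tendsto_intros) (simp add: isCont_def Lim_at_imp_Lim_at_within)
  ultimately have "((\<lambda>y. (norm (\<phi> y) / y / sqrt (norm (\<phi>' y))) / (U y / y)) \<longlongrightarrow> (1 / 1) / 1) (at_right 0)"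
    using norm_over_parameter_limit[OF init(1) d1] init(2) by (intro tendsto_divide) auto
  moreover have "\<forall>\<^sub>F y in at_right 0.
      (norm (\<phi> y) / y / sqrt (norm (\<phi>' y))) / (U y / y) = speed_ratio \<phi> \<phi>' y / U y"
    by (rule eventually_at_rightI[of 0 1]) (auto simp: speed_ratio_def)
  ultimately show ?thesis by (simp add: Lim_transform_eventually)
qed

text \<open>
  The Wronskian of w and U tends to 0 at 0: every term is continuous at 0 and vanishes there,
  except <phi, phi'> / |phi| * U / |phi'|^(1/2), which is bounded by |phi'| |U| / |phi'|^(1/2).
\<close>

lemma speed_ratio_wronskian_limit:
  fixes \<phi> \<phi>' \<phi>'' :: "real \<Rightarrow> 'a::real_inner" and U U' :: "real \<Rightarrow> real"
  assumes d1: "(\<phi> has_vector_derivative \<phi>' 0) (at 0)" and init: "\<phi> 0 = 0" "norm (\<phi>' 0) = 1"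
    and cf: "isCont \<phi>' 0" "isCont \<phi>'' 0"
    and cU: "isCont U 0" and U0: "U 0 = 0" and cU': "isCont U' 0"
  shows "((\<lambda>t. speed_ratio_deriv \<phi> \<phi>' \<phi>'' t * U t - speed_ratio \<phi> \<phi>' t * U' t) \<longlongrightarrow> 0) (at_right 0)"
proof -
  have right: "(g \<longlongrightarrow> g 0) (at_right 0)" if "isCont g 0" for g :: "real \<Rightarrow> real"
    using that by (simp add: isCont_def Lim_at_imp_Lim_at_within)
  have cont: "isCont (\<lambda>t. norm (\<phi> t)) 0" "isCont (\<lambda>t. sqrt (norm (\<phi>' t))) 0"
    "isCont (\<lambda>t. inner (\<phi>' t) (\<phi>'' t)) 0"
    using has_vector_derivative_continuous[OF d1] cf by (auto intro!: continuous_intros)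
  have singular: "((\<lambda>t. inner (\<phi> t) (\<phi>' t) / norm (\<phi> t) * (U t / sqrt (norm (\<phi>' t)))) \<longlongrightarrow> 0) (at_right 0)"
  proof (rule Lim_null_comparison)
    have "\<bar>inner (\<phi> t) (\<phi>' t) / norm (\<phi> t)\<bar> \<le> norm (\<phi>' t)" for t
      using Cauchy_Schwarz_ineq2[of "\<phi> t" "\<phi>' t"]
      by (cases "\<phi> t = 0") (simp_all add: abs_div divide_le_eq mult.commute)
    then show "\<forall>\<^sub>F t in at_right 0. norm (inner (\<phi> t) (\<phi>' t) / norm (\<phi> t) * (U t / sqrt (norm (\<phi>' t))))
        \<le> norm (\<phi>' t) * \<bar>U t / sqrt (norm (\<phi>' t))\<bar>"
      unfolding real_norm_def abs_mult by (intro always_eventually allI mult_right_mono) auto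
    have "((\<lambda>t. norm (\<phi>' t) * \<bar>U t / sqrt (norm (\<phi>' t))\<bar>) \<longlongrightarrow>
            norm (\<phi>' 0) * \<bar>U 0 / sqrt (norm (\<phi>' 0))\<bar>) (at_right 0)"
      using cf(1) cU cont(2) init(2) by (intro tendsto_intros right) (auto intro: continuous_intros)
    then show "((\<lambda>t. norm (\<phi>' t) * \<bar>U t / sqrt (norm (\<phi>' t))\<bar>) \<longlongrightarrow> 0) (at_right 0)"
      using U0 by simp
  qed
  have "((\<lambda>t. norm (\<phi> t) * inner (\<phi>' t) (\<phi>'' t) * U t / (2 * sqrt (norm (\<phi>' t)) ^ 5)
                + norm (\<phi> t) / sqrt (norm (\<phi>' t)) * U' t) \<longlongrightarrow>
        norm (\<phi> 0) * inner (\<phi>' 0) (\<phi>'' 0) * U 0 / (2 * sqrt (norm (\<phi>' 0)) ^ 5)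
                + norm (\<phi> 0) / sqrt (norm (\<phi>' 0)) * U' 0) (at_right 0)"
    using cont cU cU' init(2) by (intro tendsto_intros right) auto
  then have regular: "((\<lambda>t. norm (\<phi> t) * inner (\<phi>' t) (\<phi>'' t) * U t / (2 * sqrt (norm (\<phi>' t)) ^ 5)
                     + speed_ratio \<phi> \<phi>' t * U' t) \<longlongrightarrow> 0) (at_right 0)"
    using init(1) by (simp add: speed_ratio_def)
  show ?thesis
    using tendsto_diff[OF singular regular] by (simp add: speed_ratio_deriv_def algebra_simps)
qed

context
  fixes \<phi> \<phi>' \<phi>'' \<phi>''' :: "real \<Rightarrow> 'a::real_inner" and p U U' :: "real \<Rightarrow> real"
  assumes d1: "\<And>t. 0 \<le> t \<Longrightarrow> t < 1 \<Longrightarrow> (\<phi> has_vector_derivative \<phi>' t) (at t)"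
    and d2: "\<And>t. 0 \<le> t \<Longrightarrow> t < 1 \<Longrightarrow> (\<phi>' has_vector_derivative \<phi>'' t) (at t)"
    and d3: "\<And>t. 0 \<le> t \<Longrightarrow> t < 1 \<Longrightarrow> (\<phi>'' has_vector_derivative \<phi>''' t) (at t)"
    and nz: "\<And>t. 0 \<le> t \<Longrightarrow> t < 1 \<Longrightarrow> \<phi>' t \<noteq> 0"
    and init: "\<phi> 0 = 0" "norm (\<phi>' 0) = 1"
    and dU: "\<And>t. 0 \<le> t \<Longrightarrow> t < 1 \<Longrightarrow> (U has_real_derivative U' t) (at t)"
    and dU': "\<And>t. 0 \<le> t \<Longrightarrow> t < 1 \<Longrightarrow> (U' has_real_derivative - p t * U t) (at t)"
    and U0: "U 0 = 0" "U' 0 = 1"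
    and Upos: "\<And>t. 0 < t \<Longrightarrow> t < 1 \<Longrightarrow> U t > 0"
    and S: "\<And>t. 0 < t \<Longrightarrow> t < 1 \<Longrightarrow> schwarz_form (\<phi>' t) (\<phi>'' t) (\<phi>''' t) \<le> 2 * p t"
begin

lemma curve_comparison_before_zero:
  assumes y: "y \<le> 1" and away: "\<And>t. 0 < t \<Longrightarrow> t < y \<Longrightarrow> \<phi> t \<noteq> 0" and s: "0 < s" "s < y"
  shows "U s \<le> speed_ratio \<phi> \<phi>' s"
proof (rule sturm_comparison[where w' = "speed_ratio_deriv \<phi> \<phi>' \<phi>''" and U' = U' and p = p, OF _ _ _ _ _ _ _ s])
  fix t assume t: "0 < t" "t < y"
  then have t': "0 \<le> t" "t < 1" using y by auto
  show "(speed_ratio \<phi> \<phi>' has_real_derivative speed_ratio_deriv \<phi> \<phi>' \<phi>'' t) (at t)"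
    using d1[OF t'] d2[OF t'] away[OF t] nz[OF t'] by (rule speed_ratio_has_derivative)
  show "\<exists>D. (speed_ratio_deriv \<phi> \<phi>' \<phi>'' has_real_derivative D) (at t) \<and> 0 \<le> D + p t * speed_ratio \<phi> \<phi>' t"
    using d1[OF t'] d2[OF t'] d3[OF t'] away[OF t] nz[OF t'] S[OF t(1) t'(2)]
    by (rule speed_ratio_supersolution)
  show "(U has_real_derivative U' t) (at t)" "(U' has_real_derivative - p t * U t) (at t)" "U t > 0"
    using dU[OF t'] dU'[OF t'] Upos[OF t(1) t'(2)] by simp_all
next
  have "isCont U' 0" using DERIV_isCont[OF dU'] by simp
  then show "((\<lambda>t. speed_ratio_deriv \<phi> \<phi>' \<phi>'' t * U t - speed_ratio \<phi> \<phi>' t * U' t) \<longlongrightarrow> 0) (at_right 0)"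
    using has_vector_derivative_continuous[OF d2] has_vector_derivative_continuous[OF d3]
      DERIV_isCont[OF dU] U0 by (intro speed_ratio_wronskian_limit d1 init) auto
  show "((\<lambda>t. speed_ratio \<phi> \<phi>' t / U t) \<longlongrightarrow> 1) (at_right 0)"
    using has_vector_derivative_continuous[OF d2] dU[of 0] U0
    by (intro speed_ratio_quotient_limit d1 init) auto
qed

lemma curve_comparison_right:
  assumes x: "0 < x" "x < 1"
  shows "U x \<le> speed_ratio \<phi> \<phi>' x"
proof (rule comparison_continuation[where b = 1, OF _ _ Upos _ _ x])
  show "isCont (speed_ratio \<phi> \<phi>') t" if "0 < t" "t < 1" for t
    using has_vector_derivative_continuous[OF d1] has_vector_derivative_continuous[OF d2] nz that
    unfolding speed_ratio_def[abs_def] by (auto intro!: continuous_intros)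
  show "isCont U t" if "0 < t" "t < 1" for t
    using DERIV_isCont[OF dU] that by simp
  have "\<forall>\<^sub>F y in at_right 0. 1/2 < norm (\<phi> y) / y"
    using norm_over_parameter_limit[OF init(1) d1] init(2) by (intro order_tendstoD(1)) auto
  then obtain \<delta> where \<delta>: "\<delta> > 0" "\<And>y. 0 < y \<Longrightarrow> y < \<delta> \<Longrightarrow> 1/2 < norm (\<phi> y) / y"
    by (auto simp: eventually_at_right_field)
  show "\<exists>\<delta>>0. \<forall>t. 0 < t \<and> t < \<delta> \<longrightarrow> speed_ratio \<phi> \<phi>' t \<noteq> 0"
  proof (intro exI[of _ "min \<delta> 1"] conjI allI impI)
    fix t assume t: "0 < t \<and> t < min \<delta> 1"
    then have "\<phi> t \<noteq> 0" "\<phi>' t \<noteq> 0" using \<delta>(2)[of t] nz[of t] by auto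
    then show "speed_ratio \<phi> \<phi>' t \<noteq> 0" by (simp add: speed_ratio_def)
  qed (use \<delta> in auto)
  show "U s \<le> speed_ratio \<phi> \<phi>' s"
    if "y \<le> 1" "\<And>t. 0 < t \<Longrightarrow> t < y \<Longrightarrow> speed_ratio \<phi> \<phi>' t \<noteq> 0" "0 < s" "s < y" for y s
    using that by (intro curve_comparison_before_zero) (auto simp: speed_ratio_def)
qed

end

text \<open>Both halves: the left half is the right half for the reflected curve and solution.\<close>

lemma curve_comparison:
  fixes \<phi> \<phi>' \<phi>'' \<phi>''' :: "real \<Rightarrow> 'a::real_inner" and p U U' :: "real \<Rightarrow> real"
  defines "I \<equiv> {-1<..<1::real}"
  assumes d1: "\<And>t. t \<in> I \<Longrightarrow> (\<phi> has_vector_derivative \<phi>' t) (at t)"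
    and d2: "\<And>t. t \<in> I \<Longrightarrow> (\<phi>' has_vector_derivative \<phi>'' t) (at t)"
    and d3: "\<And>t. t \<in> I \<Longrightarrow> (\<phi>'' has_vector_derivative \<phi>''' t) (at t)"
    and nz: "\<And>t. t \<in> I \<Longrightarrow> \<phi>' t \<noteq> 0"
    and init: "\<phi> 0 = 0" "norm (\<phi>' 0) = 1"
    and dU: "\<And>t. t \<in> I \<Longrightarrow> (U has_real_derivative U' t) (at t)"
    and dU': "\<And>t. t \<in> I \<Longrightarrow> (U' has_real_derivative - p t * U t) (at t)"
    and U0: "U 0 = 0" "U' 0 = 1"
    and Upos: "\<And>t. 0 < t \<Longrightarrow> t < 1 \<Longrightarrow> U t > 0" and Uneg: "\<And>t. -1 < t \<Longrightarrow> t < 0 \<Longrightarrow> U t < 0"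
    and S: "\<And>t. t \<in> I \<Longrightarrow> schwarz_form (\<phi>' t) (\<phi>'' t) (\<phi>''' t) \<le> 2 * p t"
    and x: "x \<in> I"
  shows "\<bar>U x\<bar> \<le> speed_ratio \<phi> \<phi>' x"
proof -
  have I: "t \<in> I" "- t \<in> I" if "0 \<le> t" "t < 1" for t using that by (auto simp: I_def)
  consider "0 < x" | "x = 0" | "x < 0" by linarith
  then show ?thesis
  proof cases
    case 1
    have "U x \<le> speed_ratio \<phi> \<phi>' x"
      by (rule curve_comparison_right[where \<phi>'' = \<phi>'' and \<phi>''' = \<phi>''' and U' = U' and p = p])
        (use d1 d2 d3 nz init dU dU' U0 Upos S x 1 I in \<open>auto simp: I_def\<close>)
    then show ?thesis using Upos[OF 1] x by (simp add: I_def)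
  next
    case 2
    then show ?thesis using U0 by (simp add: speed_ratio_def)
  next
    case 3
    have "(\<lambda>t. - U (- t)) (- x) \<le> speed_ratio (\<lambda>t. \<phi> (- t)) (\<lambda>t. - \<phi>' (- t)) (- x)"
    proof (rule curve_comparison_right[where \<phi>'' = "\<lambda>t. \<phi>'' (- t)" and \<phi>''' = "\<lambda>t. - \<phi>''' (- t)"
          and U' = "\<lambda>t. U' (- t)" and p = "\<lambda>t. p (- t)"])
      fix t :: real assume t: "0 \<le> t" "t < 1"
      show "((\<lambda>t. \<phi> (- t)) has_vector_derivative - \<phi>' (- t)) (at t)"
        by (rule has_vector_derivative_reflect) (simp add: d1 I[OF t])
      show "((\<lambda>t. - \<phi>' (- t)) has_vector_derivative \<phi>'' (- t)) (at t)"
        using has_vector_derivative_minus[OF has_vector_derivative_reflect[OF d2[OF I(2)[OF t]]]] by simp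
      show "((\<lambda>t. \<phi>'' (- t)) has_vector_derivative - \<phi>''' (- t)) (at t)"
        by (rule has_vector_derivative_reflect) (simp add: d3 I[OF t])
      show "- \<phi>' (- t) \<noteq> 0" using nz[OF I(2)[OF t]] by simp
      show "((\<lambda>t. - U (- t)) has_real_derivative U' (- t)) (at t)"
        using DERIV_minus[OF has_real_derivative_reflect[OF dU]] I[OF t] by simp
      show "((\<lambda>t. U' (- t)) has_real_derivative - p (- t) * - U (- t)) (at t)"
        using has_real_derivative_reflect[OF dU'] I[OF t] by simp
    next
      fix t :: real assume t: "0 < t" "t < 1"
      show "- U (- t) > 0" using Uneg[of "- t"] t by simp
      show "schwarz_form (- \<phi>' (- t)) (\<phi>'' (- t)) (- \<phi>''' (- t)) \<le> 2 * p (- t)"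
        using S[of "- t"] t by (simp add: schwarz_form_def I_def)
    qed (use init U0 3 x in \<open>auto simp: I_def\<close>)
    then show ?thesis using Uneg[of x] 3 x by (simp add: speed_ratio_def I_def)
  qed
qed

theorem mainTheorem2:
  fixes p F :: "real \<Rightarrow> real" and \<phi> :: "real \<Rightarrow> real ^ 'n"
  assumes p_pos: "\<forall>x\<in>{-1<..<1}. p x > 0"
    and p_cont: "continuous_on {-1<..<1} p"
    and p_even: "\<forall>x\<in>{-1<..<1}. p (- x) = p x"
    and p_disc: "disconjugate_on {-1<..<1} p"
    and F_C3: "C3_on {-1<..<1} F"
    and F_nonsing: "\<forall>x\<in>{-1<..<1}. deriv F x \<noteq> 0"
    and F_schw: "\<forall>x\<in>{-1<..<1}. schwarzian F x = 2 * p x"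
    and F_init: "F 0 = 0" "deriv F 0 = 1" "deriv (deriv F) 0 = 0"
    and phi_C3: "C3_on {-1<..<1} \<phi>"
    and phi_nonsing: "\<forall>x\<in>{-1<..<1}. vd \<phi> x \<noteq> 0"
    and phi_init: "\<phi> 0 = 0" "norm (vd \<phi> 0) = 1" "inner (vd \<phi> 0) (vd (vd \<phi>) 0) = 0"
    and phi_S1: "\<forall>x\<in>{-1<..<1}. ahlfors_S1 \<phi> x \<le> 2 * p x"
  shows "\<forall>x\<in>{-1<..<1}. norm (\<phi> x) / sqrt (norm (vd \<phi> x)) \<ge> \<bar>F x\<bar> / sqrt (deriv F x)"
proof
  fix x assume x: "x \<in> {-1<..<1::real}"
  define I where "I = {-1<..<1::real}"
  have I: "open I" "is_interval I" "0 \<in> I" by (auto simp: I_def is_interval_def)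
  have "deriv F 0 > 0" using F_init(2) by simp
  note sol = schwarzian_normal_solution[OF I(1,2) F_C3[folded I_def] F_nonsing[folded I_def] I(3) this
      F_schw[folded I_def]]
  have U0: "sqrt_normalized F 0 = 0" "sqrt_normalized_deriv F 0 = 1"
    using F_init by (simp_all add: sqrt_normalized_def sqrt_normalized_deriv_def)
  note sign = disconjugate_solution_sign[OF I p_disc[folded I_def] sol(2,3) U0, unfolded I_def]
  obtain \<phi>' \<phi>'' \<phi>''' where
    d1: "\<And>t. t \<in> I \<Longrightarrow> (\<phi> has_vector_derivative \<phi>' t) (at t)" and
    d2: "\<And>t. t \<in> I \<Longrightarrow> (\<phi>' has_vector_derivative \<phi>'' t) (at t)" and
    d3: "\<And>t. t \<in> I \<Longrightarrow> (\<phi>'' has_vector_derivative \<phi>''' t) (at t)"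
    using phi_C3 unfolding C3_on_def I_def by blast
  note vd = vd_iterates[OF I(1) d1 d2 d3] and S1 = ahlfors_S1_eq_schwarz_form[OF I(1) d1 d2 d3]
  have "\<bar>sqrt_normalized F x\<bar> \<le> speed_ratio \<phi> \<phi>' x"
    by (rule curve_comparison[OF d1 d2 d3 _ phi_init(1) _ sol(2,3) U0])
      (use sign x phi_init(2) vd S1 I(3) phi_nonsing phi_S1 in \<open>auto simp: I_def\<close>)
  then show "\<bar>F x\<bar> / sqrt (deriv F x) \<le> norm (\<phi> x) / sqrt (norm (vd \<phi> x))"
    using sol(1)[of x] vd(1)[of x] x by (simp add: sqrt_normalized_def speed_ratio_def abs_div I_def)
qed

end
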